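(* Let $N$ be a set of $n$ elements, $v:2^N\to\mathbb{R}_+$ a monotone submodular function with $v(\emptyset)=0$, and $r(S)=\sum_{i\in S}v(\{i\}\mid S\setminus\{i\})$. Let $s>0$ be such that $k=s\cdot H_n$ is a positive integer, where $H_n=\sum_{j=1}^n\frac1j$, and let $S_1,\dots,S_k$ be independent random sets, each sampled by: pick a size $m\in\{1,\dots,n\}$ with probability $(m H_n)^{-1}$, then pick a uniformly random subset of $N$ of size $m$. Then $$\Pr\Big[\max_{i}r(S_i)\ge\frac{v(N)}{2H_n}\Big]\ge1-e^{-s/2}.$$
   Context: Marginal value: $v(\{i\}\mid T)=v(T\cup\{i\})-v(T)$; submodular means $v(S\cup T)+v(S\cap T)\le v(S)+v(T)$ for all $S,T$. *)

theory Defs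
  imports "HOL-Probability.Probability"
begin

definition marginal :: "('a set \<Rightarrow> real) \<Rightarrow> 'a \<Rightarrow> 'a set \<Rightarrow> real" where
  "marginal v i T = v (T \<union> {i}) - v T"

definition rval :: "('a set \<Rightarrow> real) \<Rightarrow> 'a set \<Rightarrow> real" where
  "rval v S = (\<Sum>i\<in>S. marginal v i (S - {i}))"

definition monotone_fn :: "'a set \<Rightarrow> ('a set \<Rightarrow> real) \<Rightarrow> bool" where
  "monotone_fn N v \<longleftrightarrow> (\<forall>S T. S \<subseteq> T \<and> T \<subseteq> N \<longrightarrow> v S \<le> v T)"

definition submodular :: "'a set \<Rightarrow> ('a set \<Rightarrow> real) \<Rightarrow> bool" where
  "submodular N v \<longleftrightarrow>
     (\<forall>S T. S \<subseteq> N \<and> T \<subseteq> N \<longrightarrow> v (S \<union> T) + v (S \<inter> T) \<le> v S + v T)"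

definition size_pmf :: "nat \<Rightarrow> nat pmf" where
  "size_pmf n = embed_pmf (\<lambda>m. if m \<in> {1..n} then 1 / (real m * harm n) else 0)"

definition random_set_pmf :: "'a set \<Rightarrow> 'a set pmf" where
  "random_set_pmf N = do {
     m \<leftarrow> size_pmf (card N);
     pmf_of_set {S. S \<subseteq> N \<and> card S = m}
   }"

end

theory Submission
  imports Defs
begin

text \<open>
  Let \<open>m\<^sub>j\<close> be the mean of \<open>v\<close> over the \<open>j\<close>-subsets of \<open>N\<close>. Counting the pairs
  \<open>(S, i)\<close> with \<open>i \<in> S\<close> twice shows that a uniform \<open>j\<close>-subset \<open>S\<close> has
  \<open>E[r(S)] = j (m\<^sub>j - m\<^sub>j\<^sub>-\<^sub>1)\<close>; the size weights \<open>1/(j H\<^sub>n)\<close> make the sum telescope, so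
  \<open>E[r(S)] = v(N)/H\<^sub>n\<close>. Submodularity and monotonicity give \<open>r(S) \<le> v(S) \<le> v(N)\<close>, so a
  reverse Markov inequality bounds the probability of \<open>r(S) < v(N)/(2H\<^sub>n)\<close> by
  \<open>1 - 1/(2H\<^sub>n)\<close>, and all \<open>k\<close> independent samples fail with probability at most
  \<open>(1 - 1/(2H\<^sub>n))\<^sup>k \<le> exp(-k/(2H\<^sub>n)) = exp(-s/2)\<close>.
\<close>

lemma sum_removal_decrements_le:
  assumes sub: "submodular N v" and fin: "finite S" and "S \<subseteq> T" and "T \<subseteq> N"
  shows "(\<Sum>i\<in>S. v T - v (T - {i})) \<le> v T - v (T - S)"
  using fin \<open>S \<subseteq> T\<close>
proof (induction S rule: finite_induct)
  case empty
  then show ?case by simp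
next
  case (insert x S)
  have "v ((T - {x}) \<union> (T - S)) + v ((T - {x}) \<inter> (T - S)) \<le> v (T - {x}) + v (T - S)"
    using \<open>T \<subseteq> N\<close> by (intro sub[unfolded submodular_def, rule_format] conjI) auto
  moreover have "(T - {x}) \<union> (T - S) = T" "(T - {x}) \<inter> (T - S) = T - insert x S"
    using insert by auto
  ultimately have "v T - v (T - {x}) \<le> v (T - S) - v (T - insert x S)"
    by simp
  moreover have "(\<Sum>i\<in>S. v T - v (T - {i})) \<le> v T - v (T - S)"
    using insert by simp
  ultimately show ?case
    using insert(1,2) by simp
qed

lemma rval_eq_sum_removal_decrements:
  "rval v S = (\<Sum>i\<in>S. v S - v (S - {i}))"
  unfolding rval_def marginal_def by (intro sum.cong refl) (simp add: insert_absorb)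

lemma rval_le_increment:
  assumes "submodular N v" "finite S" "S \<subseteq> N"
  shows "rval v S \<le> v S - v {}"
  using sum_removal_decrements_le[OF assms(1,2) order.refl assms(3)]
  by (simp add: rval_eq_sum_removal_decrements)

lemma rval_nonneg:
  assumes "monotone_fn N v" "S \<subseteq> N"
  shows "0 \<le> rval v S"
  using assms unfolding rval_eq_sum_removal_decrements monotone_fn_def
  by (intro sum_nonneg) auto

abbreviation subsets_card :: "'a set \<Rightarrow> nat \<Rightarrow> 'a set set" where
  "subsets_card N j \<equiv> {S. S \<subseteq> N \<and> card S = j}"

lemma finite_subsets_card: "finite N \<Longrightarrow> finite (subsets_card N j)"
  by (rule finite_subset[of _ "Pow N"]) auto

lemma subsets_card_nonempty: "finite N \<Longrightarrow> j \<le> card N \<Longrightarrow> subsets_card N j \<noteq> {}"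
  using obtain_subset_with_card_n by blast

lemma sum_subsets_card_Suc_removals:
  assumes fin: "finite N"
  shows "(\<Sum>S\<in>subsets_card N (Suc j). \<Sum>i\<in>S. g (S - {i}))
       = real (card N - j) * (\<Sum>T\<in>subsets_card N j. g T)"
proof -
  have "(\<Sum>S\<in>subsets_card N (Suc j). \<Sum>i\<in>S. g (S - {i}))
      = (\<Sum>(S, i)\<in>Sigma (subsets_card N (Suc j)) (\<lambda>S. S). g (S - {i}))"
    using fin by (subst sum.Sigma) (auto simp: finite_subsets_card dest: finite_subset)
  also have "\<dots> = (\<Sum>(T, i)\<in>Sigma (subsets_card N j) (\<lambda>T. N - T). g T)"
    by (rule sum.reindex_bij_witness[where i="\<lambda>(T, i). (insert i T, i)" and j="\<lambda>(S, i). (S - {i}, i)"])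
       (auto simp: card_Diff_singleton dest: finite_subset[OF _ fin])
  also have "\<dots> = (\<Sum>T\<in>subsets_card N j. real (card (N - T)) * g T)"
    using fin by (subst sum.Sigma[symmetric]) (auto simp: finite_subsets_card)
  also have "\<dots> = (\<Sum>T\<in>subsets_card N j. real (card N - j) * g T)"
    using fin by (intro sum.cong refl) (auto simp: card_Diff_subset finite_subset)
  finally show ?thesis by (simp add: sum_distrib_left)
qed

definition layer_mean :: "'a set \<Rightarrow> ('a set \<Rightarrow> real) \<Rightarrow> nat \<Rightarrow> real" where
  "layer_mean N v j = (\<Sum>T\<in>subsets_card N j. v T) / real (card N choose j)"

lemma layer_mean_0: "finite N \<Longrightarrow> layer_mean N v 0 = v {}"
proof -
  assume "finite N"
  then have "subsets_card N 0 = {{}}" by (auto dest: finite_subset)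
  then show ?thesis by (simp add: layer_mean_def)
qed

lemma layer_mean_card: "finite N \<Longrightarrow> layer_mean N v (card N) = v N"
proof -
  assume "finite N"
  then have "subsets_card N (card N) = {N}" using card_subset_eq by auto
  then show ?thesis by (simp add: layer_mean_def)
qed

lemma expectation_rval_pmf_of_subsets_card:
  assumes fin: "finite N" and j: "Suc j \<le> card N"
  shows "measure_pmf.expectation (pmf_of_set (subsets_card N (Suc j))) (rval v)
       = real (Suc j) * (layer_mean N v (Suc j) - layer_mean N v j)"
proof -
  let ?n = "card N"
  have sum_rval: "(\<Sum>S\<in>subsets_card N (Suc j). rval v S)
      = real (Suc j) * (\<Sum>S\<in>subsets_card N (Suc j). v S) - real (?n - j) * (\<Sum>T\<in>subsets_card N j. v T)"
    by (simp add: rval_eq_sum_removal_decrements sum_subtractf sum_distrib_left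
        sum_subsets_card_Suc_removals[OF fin])
  have "real (Suc j) * real (?n choose Suc j) = real (?n - j) * real (?n choose j)"
    unfolding of_nat_mult[symmetric] binomial_absorption binomial_absorb_comp ..
  then have ratio: "real (?n - j) / real (?n choose Suc j) = real (Suc j) / real (?n choose j)"
    using j by (simp add: field_simps)
  have "measure_pmf.expectation (pmf_of_set (subsets_card N (Suc j))) (rval v)
      = (\<Sum>S\<in>subsets_card N (Suc j). rval v S) / real (?n choose Suc j)"
    by (simp add: integral_pmf_of_set[OF subsets_card_nonempty[OF fin j] finite_subsets_card[OF fin]]
        n_subsets[OF fin])
  also have "\<dots> = real (Suc j) * layer_mean N v (Suc j)
      - real (?n - j) / real (?n choose Suc j) * (\<Sum>T\<in>subsets_card N j. v T)"
    unfolding sum_rval layer_mean_def by (simp add: diff_divide_distrib)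
  also have "\<dots> = real (Suc j) * (layer_mean N v (Suc j) - layer_mean N v j)"
    unfolding ratio layer_mean_def by (simp add: right_diff_distrib)
  finally show ?thesis .
qed

lemma pmf_size_pmf:
  assumes "0 < n"
  shows "pmf (size_pmf n) m = (if m \<in> {1..n} then 1 / (real m * harm n) else 0)"
proof -
  let ?f = "\<lambda>m. if m \<in> {1..n} then 1 / (real m * harm n) else 0 :: real"
  have nonneg: "0 \<le> ?f m" for m
    by (simp add: harm_nonneg)
  have "(\<Sum>m\<in>{1..n}. ?f m) = (\<Sum>m\<in>{1..n}. inverse (real m)) / harm n"
    by (simp add: sum_divide_distrib field_simps)
  also have "\<dots> = harm n / harm n"
    by (simp add: harm_def)
  also have "\<dots> = 1"
    using harm_pos[OF assms, where 'a=real] by (simp del: harm_pos_iff)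
  finally have sum_one: "(\<Sum>m\<in>{1..n}. ?f m) = 1" .
  have "(\<integral>\<^sup>+m. ennreal (?f m) \<partial>count_space UNIV) = (\<Sum>m\<in>{1..n}. ennreal (?f m))"
    by (rule nn_integral_count_space') auto
  also have "\<dots> = ennreal (\<Sum>m\<in>{1..n}. ?f m)"
    using nonneg by (intro sum_ennreal)
  also have "\<dots> = 1"
    using sum_one by simp
  finally have "(\<integral>\<^sup>+m. ennreal (?f m) \<partial>count_space UNIV) = 1" .
  then show ?thesis
    unfolding size_pmf_def using nonneg by (subst pmf_embed_pmf) auto
qed

lemma set_pmf_size_pmf: "0 < n \<Longrightarrow> set_pmf (size_pmf n) \<subseteq> {1..n}"
  by (auto simp: set_pmf_eq pmf_size_pmf)

lemma set_pmf_of_subsets_card: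
  "finite N \<Longrightarrow> j \<le> card N \<Longrightarrow> set_pmf (pmf_of_set (subsets_card N j)) = subsets_card N j"
  by (intro set_pmf_of_set subsets_card_nonempty finite_subsets_card)

lemma set_pmf_random_set_pmf:
  assumes "finite N" "0 < card N"
  shows "set_pmf (random_set_pmf N) \<subseteq> Pow N"
proof
  fix S assume "S \<in> set_pmf (random_set_pmf N)"
  then obtain m where m: "m \<in> set_pmf (size_pmf (card N))"
    and S: "S \<in> set_pmf (pmf_of_set (subsets_card N m))"
    by (auto simp: random_set_pmf_def)
  have "m \<le> card N"
    using m set_pmf_size_pmf[OF assms(2)] by auto
  then show "S \<in> Pow N"
    using S set_pmf_of_subsets_card[OF assms(1)] by auto
qed

lemma expectation_rval_random_set_pmf:
  assumes fin: "finite N" and n: "0 < card N"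
  shows "measure_pmf.expectation (random_set_pmf N) (rval v) = (v N - v {}) / harm (card N)"
proof -
  let ?n = "card N"
  have "measure_pmf.expectation (random_set_pmf N) (rval v)
      = (\<Sum>m\<in>{1..?n}. pmf (size_pmf ?n) m *\<^sub>R
           measure_pmf.expectation (pmf_of_set (subsets_card N m)) (rval v))"
    unfolding random_set_pmf_def
    using set_pmf_size_pmf[OF n] set_pmf_of_subsets_card[OF fin]
    by (intro pmf_expectation_bind) (auto simp: finite_subsets_card fin)
  also have "\<dots> = (\<Sum>m\<in>{1..?n}. (layer_mean N v m - layer_mean N v (m - 1)) / harm ?n)"
  proof (intro sum.cong refl)
    fix m assume "m \<in> {1..?n}"
    then obtain j where "m = Suc j" "Suc j \<le> ?n"
      by (cases m) auto
    then show "pmf (size_pmf ?n) m *\<^sub>R measure_pmf.expectation (pmf_of_set (subsets_card N m)) (rval v)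
        = (layer_mean N v m - layer_mean N v (m - 1)) / harm ?n"
      by (simp add: pmf_size_pmf[OF n] expectation_rval_pmf_of_subsets_card[OF fin])
  qed
  also have "\<dots> = (layer_mean N v ?n - layer_mean N v 0) / harm ?n"
    by (subst sum_divide_distrib[symmetric]) (simp add: sum_telescope''[of 0, simplified])
  finally show ?thesis
    by (simp add: layer_mean_0 layer_mean_card fin)
qed

lemma prob_less_le_reverse_Markov:
  fixes X :: "'b \<Rightarrow> real"
  assumes fin: "finite (set_pmf P)" and bound: "\<And>x. x \<in> set_pmf P \<Longrightarrow> X x \<le> b" and "c < b"
  shows "measure_pmf.prob P {x. X x < c} \<le> (b - measure_pmf.expectation P X) / (b - c)"
proof -
  have "measure_pmf.prob P {x. X x < c} \<le> measure_pmf.prob P {x \<in> space P. b - c \<le> b - X x}"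
    by (rule measure_pmf.finite_measure_mono) auto
  also have "\<dots> \<le> (\<integral>x. b - X x \<partial>P) / (b - c)"
    using fin bound \<open>c < b\<close>
    by (intro integral_Markov_inequality_measure[where A = "{}"])
       (auto simp: integrable_measure_pmf_finite AE_measure_pmf_iff)
  also have "(\<integral>x. b - X x \<partial>P) = b - measure_pmf.expectation P X"
    using fin by (simp add: integrable_measure_pmf_finite)
  finally show ?thesis .
qed

lemma measure_Pi_pmf_ex_lessThan:
  "measure_pmf.prob (Pi_pmf {..<k} dflt (\<lambda>_. p)) {f. \<exists>i<k. Q (f i)}
     = 1 - measure_pmf.prob p {x. \<not> Q x} ^ k"
proof -
  have "{f. \<exists>i<k. Q (f i)} = space (Pi_pmf {..<k} dflt (\<lambda>_. p)) - Pi {..<k} (\<lambda>_. {x. \<not> Q x})"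
    by (auto simp: Pi_def)
  moreover have "measure_pmf.prob (Pi_pmf {..<k} dflt (\<lambda>_. p))
      (space (Pi_pmf {..<k} dflt (\<lambda>_. p)) - Pi {..<k} (\<lambda>_. {x. \<not> Q x}))
      = 1 - measure_pmf.prob (Pi_pmf {..<k} dflt (\<lambda>_. p)) (Pi {..<k} (\<lambda>_. {x. \<not> Q x}))"
    by (rule measure_pmf.prob_compl) simp
  moreover have "measure_pmf.prob (Pi_pmf {..<k} dflt (\<lambda>_. p)) (Pi {..<k} (\<lambda>_. {x. \<not> Q x}))
      = measure_pmf.prob p {x. \<not> Q x} ^ k"
    by (simp add: measure_Pi_pmf_Pi)
  ultimately show ?thesis
    by simp
qed

lemma prob_rval_small_random_set_pmf:
  assumes fin: "finite N" and n: "0 < card N"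
    and sub: "submodular N v" and mono: "monotone_fn N v" and v0: "v {} = 0"
  defines "a \<equiv> 1 / (2 * harm (card N))"
  shows "measure_pmf.prob (random_set_pmf N) {S. rval v S < a * v N} \<le> 1 - a"
proof -
  let ?P = "random_set_pmf N"
  have "harm 1 \<le> (harm (card N) :: real)"
    using n by (intro harm_mono) simp
  then have a: "0 < a" "a \<le> 1 / 2"
    by (simp_all add: a_def harm_def)
  have supp: "set_pmf ?P \<subseteq> Pow N"
    using set_pmf_random_set_pmf[OF fin n] .
  have rval_bounds: "0 \<le> rval v S \<and> rval v S \<le> v N" if "S \<in> set_pmf ?P" for S
  proof -
    have "S \<subseteq> N" "finite S"
      using that supp fin by (auto dest: finite_subset)
    moreover have "v S \<le> v N"
      using mono \<open>S \<subseteq> N\<close> unfolding monotone_fn_def by blast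
    ultimately show ?thesis
      using rval_nonneg[OF mono \<open>S \<subseteq> N\<close>] rval_le_increment[OF sub \<open>finite S\<close> \<open>S \<subseteq> N\<close>] v0
      by simp
  qed
  have "0 \<le> v N"
    using mono v0 unfolding monotone_fn_def by (metis empty_subsetI order_refl)
  then consider "v N = 0" | "0 < v N"
    by linarith
  then show ?thesis
  proof cases
    case 1
    then have "set_pmf ?P \<inter> {S. rval v S < a * v N} = {}"
      using rval_bounds by force
    then have "measure_pmf.prob ?P {S. rval v S < a * v N} = 0"
      by (simp add: measure_pmf_zero_iff)
    with a show ?thesis by simp
  next
    case 2
    have "measure_pmf.prob ?P {S. rval v S < a * v N}
        \<le> (v N - measure_pmf.expectation ?P (rval v)) / (v N - a * v N)"
      using 2 a supp fin rval_bounds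
      by (intro prob_less_le_reverse_Markov) (auto intro: finite_subset)
    also have "\<dots> = (1 - 2 * a) / (1 - a)"
      using 2 a by (simp add: expectation_rval_random_set_pmf[OF fin n] v0 a_def field_simps)
    also have "\<dots> \<le> 1 - a"
    proof -
      have "1 - 2 * a \<le> (1 - a) * (1 - a)"
        by (simp add: algebra_simps)
      with a show ?thesis
        by (subst pos_divide_le_eq) auto
    qed
    finally show ?thesis .
  qed
qed

theorem mainTheorem17:
  fixes N :: "'a set" and v :: "'a set \<Rightarrow> real" and s :: real and k :: nat
  assumes "finite N"
    and "\<forall>S. S \<subseteq> N \<longrightarrow> v S \<ge> 0"
    and "monotone_fn N v"
    and "submodular N v"
    and "v {} = 0"
    and "s > 0"
    and "k > 0"
    and "real k = s * harm (card N)"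
  shows "measure_pmf.prob (Pi_pmf {..<k} {} (\<lambda>_. random_set_pmf N))
           {f. \<exists>i<k. rval v (f i) \<ge> v N / (2 * harm (card N))}
         \<ge> 1 - exp (- s / 2)"
proof -
  define a where "a = 1 / (2 * harm (card N) :: real)"
  define q where "q = measure_pmf.prob (random_set_pmf N) {S. rval v S < a * v N}"
  have n: "0 < card N"
  proof (rule ccontr)
    assume "\<not> 0 < card N"
    then have "real k = 0"
      using assms(8) by (simp add: harm_def)
    with assms(7) show False
      by simp
  qed
  have "q \<le> 1 - a"
    unfolding q_def a_def using prob_rval_small_random_set_pmf[OF assms(1) n assms(4,3,5)] .
  then have "q ^ k \<le> exp (- a) ^ k"
    using exp_ge_add_one_self[of "- a"] by (intro power_mono) (auto simp: q_def)
  also have "\<dots> = exp (- s / 2)"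
    using assms(8) harm_pos[OF n, where 'a=real]
    by (simp add: a_def exp_of_nat_mult[symmetric] del: harm_pos_iff)
  finally show ?thesis
    using measure_Pi_pmf_ex_lessThan[of k "{}" "random_set_pmf N" "\<lambda>S. a * v N \<le> rval v S"]
    by (simp add: q_def a_def not_le)
qed

end
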